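(* Let $T$ be a $P$-Petri net, let $\rho$ be a $P$-configuration, let $Q\subseteq P$ be such that $\rho|_Q$ is $T|_Q$-bottom, let $s$ be the cardinality of the $T|_Q$-component of $\rho|_Q$, and let $d=|P\setminus Q|$. There exist a word $\sigma\in T^*$ with $|\sigma|\leq(1+d(1+s\|T\|_\infty+\|\rho\|_\infty)^{d^d})s$ and a $P$-configuration $\rho'$ with $\rho\xrightarrow{\sigma}\rho'$ such that either (1) $\rho'|_Q=\rho|_Q$ and $\rho'(p)>\rho(p)$ for every $p\in P\setminus Q$, or (2) there exists a set $Q'\subseteq P$ strictly containing $Q$ such that $\rho'|_{Q'}$ is $T|_{Q'}$-bottom and the cardinality $s'$ of the $T|_{Q'}$-component of $\rho'|_{Q'}$ satisfies $s'\leq(1+d(1+s\|T\|_\infty+\|\rho\|_\infty)^{d^d})s$.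
   Context: A $P$-configuration is a map in $\mathbb{N}^P$, $\|\rho\|_\infty=\max_p\rho(p)$. For a finite set $Q$, $\rho|_Q$ is the $Q$-configuration with $\rho|_Q(q)=\rho(q)$ if $q\in P$ and $0$ otherwise. A $P$-Petri net $T$ is a finite set of transitions $t=(\alpha_t,\beta_t)$ (pairs of $P$-configurations); $\alpha\xrightarrow{t}\beta$ iff $\alpha=\alpha_t+\gamma$, $\beta=\beta_t+\gamma$ for some configuration $\gamma$; for a word $\sigma=t_1\cdots t_k$ ($|\sigma|=k$), $\xrightarrow{\sigma}$ is the composition; $\alpha\xrightarrow{T^*}\beta$ iff $\alpha\xrightarrow{\sigma}\beta$ for some $\sigma\in T^*$. $\|T\|_\infty$ is the maximum entry among all $\alpha_t,\beta_t$, $t\in T$. $t|_Q=(\alpha_t|_Q,\beta_t|_Q)$ and $T|_Q=\{t|_Q\mid t\in T\}$. The $T$-component of $\rho$ is the set of $\beta$ with $\rho\xrightarrow{T^*}\beta\xrightarrow{T^*}\rho$; $\rho$ is $T$-bottom if its $T$-component is finite and every $\beta$ with $\rho\xrightarrow{T^*}\beta$ satisfies $\beta\xrightarrow{T^*}\rho$. *)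

theory Defs
  imports Main
begin

type_synonym 'p config = "'p \<Rightarrow> nat"
type_synonym 'p trans = "'p config \<times> 'p config"

definition is_config :: "'p set \<Rightarrow> 'p config \<Rightarrow> bool" where
  "is_config P \<rho> \<longleftrightarrow> (\<forall>p. p \<notin> P \<longrightarrow> \<rho> p = 0)"

definition is_net :: "'p set \<Rightarrow> 'p trans set \<Rightarrow> bool" where
  "is_net P T \<longleftrightarrow> finite T \<and> (\<forall>t\<in>T. is_config P (fst t) \<and> is_config P (snd t))"

definition norm_config :: "'p set \<Rightarrow> 'p config \<Rightarrow> nat" where
  "norm_config P \<rho> = Max (insert 0 (\<rho> ` P))"

definition norm_net :: "'p set \<Rightarrow> 'p trans set \<Rightarrow> nat" where
  "norm_net P T = Max (insert 0 (\<Union>t\<in>T. fst t ` P \<union> snd t ` P))"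

definition restr :: "'p set \<Rightarrow> 'p config \<Rightarrow> 'p config" where
  "restr Q \<rho> = (\<lambda>p. if p \<in> Q then \<rho> p else 0)"

definition restr_trans :: "'p set \<Rightarrow> 'p trans \<Rightarrow> 'p trans" where
  "restr_trans Q t = (restr Q (fst t), restr Q (snd t))"

definition restr_net :: "'p set \<Rightarrow> 'p trans set \<Rightarrow> 'p trans set" where
  "restr_net Q T = restr_trans Q ` T"

definition step :: "'p trans \<Rightarrow> 'p config \<Rightarrow> 'p config \<Rightarrow> bool" where
  "step t \<alpha> \<beta> \<longleftrightarrow> (\<exists>\<gamma>. \<alpha> = (\<lambda>p. fst t p + \<gamma> p) \<and> \<beta> = (\<lambda>p. snd t p + \<gamma> p))"

fun run :: "'p trans list \<Rightarrow> 'p config \<Rightarrow> 'p config \<Rightarrow> bool" where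
  "run [] \<alpha> \<beta> \<longleftrightarrow> \<alpha> = \<beta>"
| "run (t # \<sigma>) \<alpha> \<beta> \<longleftrightarrow> (\<exists>\<gamma>. step t \<alpha> \<gamma> \<and> run \<sigma> \<gamma> \<beta>)"

definition reach :: "'p trans set \<Rightarrow> 'p config \<Rightarrow> 'p config \<Rightarrow> bool" where
  "reach T \<alpha> \<beta> \<longleftrightarrow> (\<exists>\<sigma>. set \<sigma> \<subseteq> T \<and> run \<sigma> \<alpha> \<beta>)"

definition component :: "'p trans set \<Rightarrow> 'p config \<Rightarrow> 'p config set" where
  "component T \<rho> = {\<beta>. reach T \<rho> \<beta> \<and> reach T \<beta> \<rho>}"

definition bottom :: "'p trans set \<Rightarrow> 'p config \<Rightarrow> bool" where
  "bottom T \<rho> \<longleftrightarrow> finite (component T \<rho>) \<and> (\<forall>\<beta>. reach T \<rho> \<beta> \<longrightarrow> reach T \<beta> \<rho>)"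

end

theory Submission
  imports Defs "HOL-Library.FuncSet"
begin

(*
  Rackoff-style induction on the number of places of P - Q that may still be small.
  If every place outside Q is large, a shortest run of T|Q from the current restriction
  back to rho|Q stays in the bottom component, hence has length at most s; it lifts to T
  and pumps all places outside Q, since it consumes at most s ||T|| tokens from each.
  Otherwise let U be the small places and X = Q u U. The configurations of T|X reachable
  from the current one whose U-part stays below the next threshold h are at most s h^|U|
  many. If all reachable configurations are of this kind, a short run reaches a bottom
  configuration of T|X, giving Q' = X; if not, a short run raises some place of U to h
  and the induction hypothesis applies to one small place less. Short runs lift to T
  because the places outside X hold enough tokens; the thresholds G(j+1) = G(j) +
  ||T|| s G(j)^(j+1), starting from G(0) = K = 1 + s ||T|| + ||rho||, satisfy
  G(j) <= K^((j+1)^j), which yields the bound.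
*)

lemma step_iff:
  "step t \<alpha> \<beta> \<longleftrightarrow> (\<forall>p. fst t p \<le> \<alpha> p) \<and> \<beta> = (\<lambda>p. \<alpha> p - fst t p + snd t p)"
proof
  assume "step t \<alpha> \<beta>"
  then obtain \<gamma> where "\<alpha> = (\<lambda>p. fst t p + \<gamma> p)" "\<beta> = (\<lambda>p. snd t p + \<gamma> p)"
    by (auto simp: step_def)
  then show "(\<forall>p. fst t p \<le> \<alpha> p) \<and> \<beta> = (\<lambda>p. \<alpha> p - fst t p + snd t p)" by auto
next
  assume "(\<forall>p. fst t p \<le> \<alpha> p) \<and> \<beta> = (\<lambda>p. \<alpha> p - fst t p + snd t p)"
  then show "step t \<alpha> \<beta>"
    unfolding step_def by (intro exI[of _ "\<lambda>p. \<alpha> p - fst t p"]) auto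
qed

lemma run_append: "run (\<sigma>\<^sub>1 @ \<sigma>\<^sub>2) \<alpha> \<beta> \<longleftrightarrow> (\<exists>\<gamma>. run \<sigma>\<^sub>1 \<alpha> \<gamma> \<and> run \<sigma>\<^sub>2 \<gamma> \<beta>)"
  by (induction \<sigma>\<^sub>1 arbitrary: \<alpha>) auto

fun exec :: "'p trans list \<Rightarrow> 'p config \<Rightarrow> 'p config" where
  "exec [] \<alpha> = \<alpha>"
| "exec (t # \<sigma>) \<alpha> = exec \<sigma> (\<lambda>p. \<alpha> p - fst t p + snd t p)"

lemma run_imp_exec: "run \<sigma> \<alpha> \<beta> \<Longrightarrow> \<beta> = exec \<sigma> \<alpha>"
  by (induction \<sigma> arbitrary: \<alpha>) (auto simp: step_iff)

lemma run_take_drop: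
  assumes "run \<sigma> \<alpha> \<beta>"
  shows "run (take i \<sigma>) \<alpha> (exec (take i \<sigma>) \<alpha>)" "run (drop i \<sigma>) (exec (take i \<sigma>) \<alpha>) \<beta>"
proof -
  from assms obtain \<gamma> where "run (take i \<sigma>) \<alpha> \<gamma>" "run (drop i \<sigma>) \<gamma> \<beta>"
    using run_append[of "take i \<sigma>" "drop i \<sigma>"] by auto
  then show "run (take i \<sigma>) \<alpha> (exec (take i \<sigma>) \<alpha>)" "run (drop i \<sigma>) (exec (take i \<sigma>) \<alpha>) \<beta>"
    using run_imp_exec by metis+
qed

lemma reach_refl: "reach N \<alpha> \<alpha>"
  unfolding reach_def by (intro exI[of _ "[]"]) auto

lemma reach_trans: "reach N \<alpha> \<beta> \<Longrightarrow> reach N \<beta> \<gamma> \<Longrightarrow> reach N \<alpha> \<gamma>"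
  unfolding reach_def by (metis Un_subset_iff run_append set_append)

lemma reach_run_trans: "reach N \<alpha> \<beta> \<Longrightarrow> set \<sigma> \<subseteq> N \<Longrightarrow> run \<sigma> \<beta> \<gamma> \<Longrightarrow> reach N \<alpha> \<gamma>"
  using reach_trans unfolding reach_def by blast

lemma restr_restr: "Y \<subseteq> X \<Longrightarrow> restr Y (restr X \<alpha>) = restr Y \<alpha>"
  by (auto simp: restr_def fun_eq_iff)

lemma restr_net_restr_net: "Y \<subseteq> X \<Longrightarrow> restr_net Y (restr_net X N) = restr_net Y N"
  by (auto simp: restr_net_def restr_trans_def restr_restr image_image)

lemma is_config_restr: "is_config X (restr X \<alpha>)"
  by (simp add: is_config_def restr_def)

lemma restr_is_config: "is_config X \<alpha> \<Longrightarrow> restr X \<alpha> = \<alpha>"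
  by (auto simp: is_config_def restr_def)

lemma step_restr: "step t \<alpha> \<beta> \<Longrightarrow> step (restr_trans X t) (restr X \<alpha>) (restr X \<beta>)"
  by (auto simp: step_iff restr_trans_def restr_def)

lemma run_restr: "run \<sigma> \<alpha> \<beta> \<Longrightarrow> run (map (restr_trans X) \<sigma>) (restr X \<alpha>) (restr X \<beta>)"
  by (induction \<sigma> arbitrary: \<alpha>) (auto intro: step_restr)

lemma reach_restr: "reach N \<alpha> \<beta> \<Longrightarrow> reach (restr_net X N) (restr X \<alpha>) (restr X \<beta>)"
  unfolding reach_def restr_net_def by (metis image_mono list.set_map run_restr)

lemma restr_net_lists:
  "set \<sigma> \<subseteq> restr_net X N \<Longrightarrow> \<exists>\<tau>. set \<tau> \<subseteq> N \<and> \<sigma> = map (restr_trans X) \<tau>"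
  using lists_image[of "restr_trans X" N] unfolding restr_net_def by blast

lemma run_restr_net_is_config:
  "run \<sigma> \<alpha> \<beta> \<Longrightarrow> set \<sigma> \<subseteq> restr_net X N \<Longrightarrow> is_config X \<alpha> \<Longrightarrow> is_config X \<beta>"
proof (induction \<sigma> arbitrary: \<alpha>)
  case (Cons t \<sigma>)
  then obtain \<gamma> where "step t \<alpha> \<gamma>" "run \<sigma> \<gamma> \<beta>" by auto
  moreover from Cons.prems(2) obtain u where "t = restr_trans X u" by (auto simp: restr_net_def)
  ultimately show ?case
    using Cons by (auto simp: step_iff restr_trans_def restr_def is_config_def)
qed simp

lemma reach_restr_net_is_config:
  "reach (restr_net X N) \<alpha> \<beta> \<Longrightarrow> is_config X \<alpha> \<Longrightarrow> is_config X \<beta>"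
  unfolding reach_def using run_restr_net_is_config by blast

lemma run_cut_loop:
  assumes "run \<sigma> \<alpha> \<beta>" "exec (take i \<sigma>) \<alpha> = exec (take j \<sigma>) \<alpha>"
  shows "run (take i \<sigma> @ drop j \<sigma>) \<alpha> \<beta>"
proof -
  have "run (take i \<sigma>) \<alpha> (exec (take j \<sigma>) \<alpha>)" using run_take_drop(1)[OF assms(1), of i] assms(2) by simp
  then show ?thesis using run_take_drop(2)[OF assms(1), of j] run_append by blast
qed

lemma run_shortening:
  assumes "finite S" "set \<sigma> \<subseteq> N" "run \<sigma> \<alpha> \<beta>" "G \<beta>"
    and outside_G: "\<And>\<gamma>. reach N \<alpha> \<gamma> \<Longrightarrow> \<not> G \<gamma> \<Longrightarrow> \<gamma> \<in> S"
  shows "\<exists>\<sigma>' \<beta>'. set \<sigma>' \<subseteq> N \<and> run \<sigma>' \<alpha> \<beta>' \<and> G \<beta>' \<and> length \<sigma>' \<le> card S"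
proof -
  \<comment> \<open>Before its end, a shortest run into G visits pairwise distinct configurations outside G.\<close>
  let ?good = "\<lambda>\<sigma>. set \<sigma> \<subseteq> N \<and> (\<exists>\<beta>. run \<sigma> \<alpha> \<beta> \<and> G \<beta>)"
  obtain \<sigma>\<^sub>0 where good: "?good \<sigma>\<^sub>0" and shortest: "\<And>\<sigma>. ?good \<sigma> \<Longrightarrow> length \<sigma>\<^sub>0 \<le> length \<sigma>"
  proof -
    have "?good \<sigma>" using assms(2-4) by blast
    from ex_has_least_nat[of ?good, OF this, of length] show ?thesis using that by blast
  qed
  then obtain \<beta>\<^sub>0 where run: "run \<sigma>\<^sub>0 \<alpha> \<beta>\<^sub>0" "G \<beta>\<^sub>0" by blast
  define n where "n = length \<sigma>\<^sub>0"
  define z where "z i = exec (take i \<sigma>\<^sub>0) \<alpha>" for i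
  have prefix: "set (take i \<sigma>\<^sub>0) \<subseteq> N" "run (take i \<sigma>\<^sub>0) \<alpha> (z i)" for i
  proof -
    show "set (take i \<sigma>\<^sub>0) \<subseteq> N" using good set_take_subset by (metis order_trans)
    show "run (take i \<sigma>\<^sub>0) \<alpha> (z i)" using run_take_drop(1)[OF run(1)] unfolding z_def .
  qed
  have "z i \<in> S" if "i < n" for i
  proof (rule outside_G)
    show "reach N \<alpha> (z i)" using prefix unfolding reach_def by blast
    show "\<not> G (z i)"
    proof
      assume "G (z i)"
      then have "?good (take i \<sigma>\<^sub>0)" using prefix by blast
      then show False using shortest[of "take i \<sigma>\<^sub>0"] that n_def by simp
    qed
  qed
  moreover have "inj_on z {..<n}"
  proof (rule linorder_inj_onI')
    fix i j assume "i \<in> {..<n}" "j \<in> {..<n}" "i < j"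
    show "z i \<noteq> z j"
    proof
      assume "z i = z j"
      define \<sigma>' where "\<sigma>' = take i \<sigma>\<^sub>0 @ drop j \<sigma>\<^sub>0"
      have "set \<sigma>' \<subseteq> N"
        using good set_take_subset set_drop_subset unfolding \<sigma>'_def by (metis le_sup_iff order_trans set_append)
      moreover have "run \<sigma>' \<alpha> \<beta>\<^sub>0"
        using run_cut_loop[OF run(1)] \<open>z i = z j\<close> unfolding \<sigma>'_def z_def by blast
      ultimately have "length \<sigma>\<^sub>0 \<le> length \<sigma>'" using shortest run(2) by blast
      then show False using \<open>i < j\<close> \<open>j \<in> {..<n}\<close> unfolding \<sigma>'_def n_def by simp
    qed
  qed
  ultimately have "n \<le> card S" using card_inj_on_le[of z "{..<n}" S] assms(1) by auto
  then show ?thesis using good run n_def by blast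
qed

lemma norm_net_ge:
  assumes "finite P" "is_net P T" "t \<in> T" "p \<in> P"
  shows "fst t p \<le> norm_net P T"
  unfolding norm_net_def using assms by (intro Max_ge) (auto simp: is_net_def)

lemma norm_config_ge: "finite P \<Longrightarrow> p \<in> P \<Longrightarrow> \<rho> p \<le> norm_config P \<rho>"
  unfolding norm_config_def by (intro Max_ge) auto

lemma step_lift:
  assumes "finite P" "is_net P T" "t \<in> T" "step (restr_trans X t) (restr X \<alpha>) \<beta>"
    and large: "\<forall>p\<in>P - X. norm_net P T \<le> \<alpha> p"
  shows "\<exists>\<alpha>'. step t \<alpha> \<alpha>' \<and> restr X \<alpha>' = \<beta> \<and> (\<forall>p\<in>P - X. \<alpha> p \<le> \<alpha>' p + norm_net P T)"
proof -
  have enabled: "fst t p \<le> \<alpha> p" for p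
  proof (cases "p \<in> X")
    case True
    from assms(4) have "restr X (fst t) p \<le> restr X \<alpha> p" by (simp add: step_iff restr_trans_def)
    with True show ?thesis by (simp add: restr_def)
  next
    case False
    show ?thesis
    proof (cases "p \<in> P")
      case True
      with large \<open>p \<notin> X\<close> have "norm_net P T \<le> \<alpha> p" by blast
      then show ?thesis using norm_net_ge[OF assms(1-3) True] by (rule le_trans[rotated])
    next
      case False
      then show ?thesis using assms(2,3) by (simp add: is_net_def is_config_def)
    qed
  qed
  define \<alpha>' where "\<alpha>' = (\<lambda>p. \<alpha> p - fst t p + snd t p)"
  have "step t \<alpha> \<alpha>'" using enabled by (simp add: step_iff \<alpha>'_def)
  moreover have "restr X \<alpha>' = \<beta>"
    using assms(4) enabled by (auto simp: step_iff restr_trans_def restr_def \<alpha>'_def)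
  moreover have "\<alpha> p \<le> \<alpha>' p + norm_net P T" if "p \<in> P - X" for p
    using norm_net_ge[OF assms(1-3), of p] that by (simp add: \<alpha>'_def)
  ultimately show ?thesis by blast
qed

lemma run_lift:
  assumes "finite P" "is_net P T" "set \<sigma> \<subseteq> T" "run (map (restr_trans X) \<sigma>) (restr X \<alpha>) \<beta>"
    and "\<forall>p\<in>P - X. norm_net P T * length \<sigma> \<le> \<alpha> p"
  shows "\<exists>\<alpha>'. run \<sigma> \<alpha> \<alpha>' \<and> restr X \<alpha>' = \<beta> \<and>
    (\<forall>p\<in>P - X. \<alpha> p \<le> \<alpha>' p + norm_net P T * length \<sigma>)"
  using assms(3-5)
proof (induction \<sigma> arbitrary: \<alpha>)
  case (Cons t \<sigma>)
  let ?a = "norm_net P T"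
  from Cons.prems(2) obtain \<gamma> where
    first: "step (restr_trans X t) (restr X \<alpha>) \<gamma>" and rest: "run (map (restr_trans X) \<sigma>) \<gamma> \<beta>"
    by auto
  have "t \<in> T" using Cons.prems(1) by simp
  have large: "?a + ?a * length \<sigma> \<le> \<alpha> p" if "p \<in> P - X" for p
    using Cons.prems(3) that by simp
  then have "\<forall>p\<in>P - X. ?a \<le> \<alpha> p" by (metis add_leE)
  then obtain \<alpha>\<^sub>1 where \<alpha>\<^sub>1: "step t \<alpha> \<alpha>\<^sub>1" "restr X \<alpha>\<^sub>1 = \<gamma>" "\<forall>p\<in>P - X. \<alpha> p \<le> \<alpha>\<^sub>1 p + ?a"
    using step_lift[OF assms(1,2) \<open>t \<in> T\<close> first] by blast
  have "\<forall>p\<in>P - X. ?a * length \<sigma> \<le> \<alpha>\<^sub>1 p"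
  proof
    fix p assume p: "p \<in> P - X"
    with \<alpha>\<^sub>1(3) have "\<alpha> p \<le> \<alpha>\<^sub>1 p + ?a" by blast
    with large[OF p] show "?a * length \<sigma> \<le> \<alpha>\<^sub>1 p" by linarith
  qed
  then obtain \<alpha>' where \<alpha>': "run \<sigma> \<alpha>\<^sub>1 \<alpha>'" "restr X \<alpha>' = \<beta>"
    "\<forall>p\<in>P - X. \<alpha>\<^sub>1 p \<le> \<alpha>' p + ?a * length \<sigma>"
    using Cons.IH[of \<alpha>\<^sub>1] Cons.prems(1) rest \<alpha>\<^sub>1(2) by auto
  have "\<alpha> p \<le> \<alpha>' p + ?a * length (t # \<sigma>)" if p: "p \<in> P - X" for p
  proof -
    have "\<alpha> p \<le> \<alpha>\<^sub>1 p + ?a" "\<alpha>\<^sub>1 p \<le> \<alpha>' p + ?a * length \<sigma>" using \<alpha>\<^sub>1(3) \<alpha>'(3) p by blast+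
    then show ?thesis by simp
  qed
  then show ?case using \<alpha>\<^sub>1(1) \<alpha>' by auto
qed simp

lemma short_lifted_run:
  assumes "finite P" "is_net P T" "finite S"
    and "reach (restr_net X T) (restr X \<alpha>) \<beta>" "G \<beta>"
    and "\<And>\<gamma>. reach (restr_net X T) (restr X \<alpha>) \<gamma> \<Longrightarrow> \<not> G \<gamma> \<Longrightarrow> \<gamma> \<in> S"
    and large: "\<forall>p\<in>P - X. norm_net P T * card S \<le> \<alpha> p"
  shows "\<exists>\<sigma> \<alpha>'. set \<sigma> \<subseteq> T \<and> length \<sigma> \<le> card S \<and> run \<sigma> \<alpha> \<alpha>' \<and> G (restr X \<alpha>') \<and>
    (\<forall>p\<in>P - X. \<alpha> p \<le> \<alpha>' p + norm_net P T * card S)"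
proof -
  obtain \<sigma> where \<sigma>: "set \<sigma> \<subseteq> restr_net X T" "run \<sigma> (restr X \<alpha>) \<beta>"
    using assms(4) by (auto simp: reach_def)
  obtain \<sigma>' \<beta>' where \<sigma>': "set \<sigma>' \<subseteq> restr_net X T" "run \<sigma>' (restr X \<alpha>) \<beta>'" "G \<beta>'"
    "length \<sigma>' \<le> card S"
    using run_shortening[where G = G, OF assms(3) \<sigma> assms(5,6)] by blast
  then obtain \<tau> where \<tau>: "set \<tau> \<subseteq> T" "\<sigma>' = map (restr_trans X) \<tau>"
    using restr_net_lists by blast
  have lost: "norm_net P T * length \<tau> \<le> norm_net P T * card S" using \<sigma>'(4) \<tau>(2) by simp
  then have "\<forall>p\<in>P - X. norm_net P T * length \<tau> \<le> \<alpha> p" using large order_trans by blast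
  then obtain \<alpha>' where \<alpha>': "run \<tau> \<alpha> \<alpha>'" "restr X \<alpha>' = \<beta>'"
    "\<forall>p\<in>P - X. \<alpha> p \<le> \<alpha>' p + norm_net P T * length \<tau>"
    using run_lift[OF assms(1,2) \<tau>(1)] \<sigma>'(2) \<tau>(2) by blast
  have "\<forall>p\<in>P - X. \<alpha> p \<le> \<alpha>' p + norm_net P T * card S"
    using \<alpha>'(3) lost by (meson add_left_mono order_trans)
  with \<alpha>'(1,2) \<sigma>'(3,4) \<tau> show ?thesis by auto
qed

lemma reach_bottom:
  assumes fin: "finite {\<beta>. reach N \<alpha> \<beta>}"
  shows "\<exists>\<beta>. reach N \<alpha> \<beta> \<and> bottom N \<beta> \<and> card (component N \<beta>) \<le> card {\<beta>. reach N \<alpha> \<beta>}"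
proof -
  let ?R = "\<lambda>\<beta>. {\<gamma>. reach N \<beta> \<gamma>}"
  obtain \<beta> where reach_\<beta>: "reach N \<alpha> \<beta>"
    and least: "\<forall>\<gamma>. reach N \<alpha> \<gamma> \<longrightarrow> card (?R \<beta>) \<le> card (?R \<gamma>)"
    using ex_has_least_nat[of "reach N \<alpha>", OF reach_refl, of "\<lambda>\<beta>. card (?R \<beta>)"] by blast
  have sub: "?R \<beta> \<subseteq> ?R \<alpha>" using reach_\<beta> reach_trans by blast
  have fin_R: "finite (?R \<beta>)" using finite_subset[OF sub fin] .
  have returns: "reach N \<gamma> \<beta>" if "reach N \<beta> \<gamma>" for \<gamma>
  proof -
    have sub': "?R \<gamma> \<subseteq> ?R \<beta>" using that reach_trans by blast
    have "card (?R \<beta>) \<le> card (?R \<gamma>)" using least reach_trans[OF reach_\<beta> that] by blast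
    then have "card (?R \<gamma>) = card (?R \<beta>)" using card_mono[OF fin_R sub'] by linarith
    then have "?R \<gamma> = ?R \<beta>" by (rule card_subset_eq[OF fin_R sub'])
    then show ?thesis using reach_refl[of N \<beta>] by blast
  qed
  have comp: "component N \<beta> \<subseteq> ?R \<beta>" by (auto simp: component_def)
  then have "finite (component N \<beta>)" using fin_R by (rule finite_subset)
  moreover have "card (component N \<beta>) \<le> card (?R \<alpha>)"
    using card_mono[OF fin_R comp] card_mono[OF fin sub] by linarith
  ultimately show ?thesis using reach_\<beta> returns unfolding bottom_def by blast
qed

lemma finite_card_bounded_configs:
  fixes Q U :: "'p set" and h :: nat
  assumes "finite C" "finite U"
  defines "B \<equiv> {\<beta>. restr Q \<beta> \<in> C \<and> (\<forall>p\<in>U. \<beta> p < h) \<and> is_config (Q \<union> U) \<beta>}"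
  shows "finite B" "card B \<le> card C * h ^ card U"
proof -
  let ?f = "\<lambda>\<beta>. (restr Q \<beta>, restrict \<beta> U)"
  have inj: "inj_on ?f B"
  proof
    fix \<beta> \<beta>' assume "\<beta> \<in> B" "\<beta>' \<in> B" and eq: "?f \<beta> = ?f \<beta>'"
    show "\<beta> = \<beta>'"
    proof
      fix p
      consider "p \<in> Q" | "p \<in> U" | "p \<notin> Q \<union> U" by blast
      then show "\<beta> p = \<beta>' p"
      proof cases
        case 1 then show ?thesis using eq by (metis fst_conv restr_def)
      next
        case 2 then show ?thesis using eq by (metis snd_conv restrict_apply')
      next
        case 3 then show ?thesis using \<open>\<beta> \<in> B\<close> \<open>\<beta>' \<in> B\<close> by (simp add: B_def is_config_def)
      qed
    qed
  qed
  have im: "?f ` B \<subseteq> C \<times> (U \<rightarrow>\<^sub>E {..<h})" by (auto simp: B_def)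
  have fin: "finite (C \<times> (U \<rightarrow>\<^sub>E {..<h}))" using assms(1,2) by (simp add: finite_PiE)
  show "finite B" using finite_imageD[OF finite_subset[OF im fin] inj] .
  have "card B \<le> card (C \<times> (U \<rightarrow>\<^sub>E {..<h}))" using card_inj_on_le[OF inj im fin] .
  also have "\<dots> = card C * h ^ card U" by (simp add: card_cartesian_product card_PiE[OF assms(2)])
  finally show "card B \<le> card C * h ^ card U" .
qed

text \<open>threshold K c j is the number of tokens required on the places outside Q that are not
  among the j small ones. Passing from j to j + 1 adds c G^(j+1), where G = threshold K c j and
  c = s ||T||: exactly what a lifted run of length s G^(j+1) may consume.\<close>

fun threshold :: "nat \<Rightarrow> nat \<Rightarrow> nat \<Rightarrow> nat" where
  "threshold K c 0 = K"
| "threshold K c (Suc j) = threshold K c j + c * threshold K c j ^ Suc j"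

definition length_bound :: "nat \<Rightarrow> nat \<Rightarrow> nat \<Rightarrow> nat \<Rightarrow> nat" where
  "length_bound s K c j = s + (\<Sum>i<j. s * threshold K c i ^ Suc i)"

lemma length_bound_Suc:
  "length_bound s K c (Suc j) = length_bound s K c j + s * threshold K c j ^ Suc j"
  by (simp add: length_bound_def)

lemma threshold_ge: "K \<le> threshold K c i"
  by (induction i) auto

lemma one_add_power_le_Suc_power: "0 < k \<Longrightarrow> 1 + n ^ k \<le> Suc n ^ k"
proof (induction k)
  case (Suc k)
  show ?case
  proof (cases "k = 0")
    case False
    have "1 + n ^ Suc k \<le> Suc n * (1 + n ^ k)" by simp
    also have "\<dots> \<le> Suc n * Suc n ^ k" using Suc False by (intro mult_left_mono) simp_all
    finally show ?thesis by simp
  qed simp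
qed simp

lemma power_power_Suc_self: "((x::nat) ^ (Suc i ^ i)) ^ Suc i = x ^ (Suc i ^ Suc i)"
proof -
  have "(x ^ (Suc i ^ i)) ^ Suc i = x ^ (Suc i ^ i * Suc i)" by (rule power_mult[symmetric])
  also have "Suc i ^ i * Suc i = Suc i ^ Suc i" by (simp only: power_Suc2)
  finally show ?thesis .
qed

lemma threshold_le_power:
  assumes "1 + c \<le> K"
  shows "threshold K c i \<le> K ^ (Suc i ^ i)"
proof (induction i)
  case (Suc i)
  let ?G = "threshold K c i"
  have "1 \<le> ?G" using assms threshold_ge[of K c i] by linarith
  then have "?G \<le> ?G ^ Suc i" using power_increasing[of 1 "Suc i" ?G] by simp
  then have "threshold K c (Suc i) \<le> (1 + c) * ?G ^ Suc i" by simp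
  also have "\<dots> \<le> K * (K ^ (Suc i ^ i)) ^ Suc i"
    using assms Suc.IH by (intro mult_mono power_mono) auto
  also have "\<dots> = K ^ (1 + Suc i ^ Suc i)"
    by (simp only: power_power_Suc_self power_add power_one_right)
  also have "\<dots> \<le> K ^ (Suc (Suc i) ^ Suc i)"
    using assms one_add_power_le_Suc_power[of "Suc i" "Suc i"] by (intro power_increasing) auto
  finally show ?case .
qed simp

lemma length_bound_le:
  assumes "1 + c \<le> K"
  shows "length_bound s K c d \<le> (1 + d * K ^ (d ^ d)) * s"
proof -
  have term_le: "s * threshold K c i ^ Suc i \<le> s * K ^ (d ^ d)" if "i \<in> {..<d}" for i
  proof -
    have "threshold K c i ^ Suc i \<le> (K ^ (Suc i ^ i)) ^ Suc i"
      using threshold_le_power[OF assms] by (rule power_mono) simp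
    also have "\<dots> = K ^ (Suc i ^ Suc i)" by (rule power_power_Suc_self)
    also have "\<dots> \<le> K ^ (d ^ d)"
    proof (rule power_increasing)
      have "Suc i ^ Suc i \<le> d ^ Suc i" using that by (intro power_mono) auto
      also have "\<dots> \<le> d ^ d" using that by (intro power_increasing) auto
      finally show "Suc i ^ Suc i \<le> d ^ d" .
    qed (use assms in simp)
    finally show ?thesis by simp
  qed
  then have "(\<Sum>i<d. s * threshold K c i ^ Suc i) \<le> d * (s * K ^ (d ^ d))"
    using sum_bounded_above[of "{..<d}", OF term_le] by simp
  then show ?thesis by (simp add: length_bound_def algebra_simps)
qed

locale bottom_restriction =
  fixes P Q :: "'p set" and T :: "'p trans set" and \<rho> :: "'p config"
  assumes finite_P: "finite P" and net: "is_net P T" and Q_subset: "Q \<subseteq> P"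
    and bottom_Q: "bottom (restr_net Q T) (restr Q \<rho>)"
begin

abbreviation comp_Q :: "'p config set" where
  "comp_Q \<equiv> component (restr_net Q T) (restr Q \<rho>)"

definition enters_larger_bottom :: "'p config \<Rightarrow> nat \<Rightarrow> bool" where
  "enters_larger_bottom \<alpha> n \<longleftrightarrow> (\<exists>Q'. Q \<subset> Q' \<and> Q' \<subseteq> P \<and> bottom (restr_net Q' T) (restr Q' \<alpha>) \<and>
     card (component (restr_net Q' T) (restr Q' \<alpha>)) \<le> n)"

definition pumped :: "'p config \<Rightarrow> bool" where
  "pumped \<alpha> \<longleftrightarrow> restr Q \<alpha> = restr Q \<rho> \<and> (\<forall>p\<in>P - Q. \<alpha> p > \<rho> p)"

definition progress_within :: "'p config \<Rightarrow> nat \<Rightarrow> bool" where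
  "progress_within \<alpha> n \<longleftrightarrow> (\<exists>\<sigma> \<alpha>'. set \<sigma> \<subseteq> T \<and> length \<sigma> \<le> n \<and> run \<sigma> \<alpha> \<alpha>' \<and>
     (pumped \<alpha>' \<or> enters_larger_bottom \<alpha>' n))"

lemma enters_larger_bottom_mono:
  "enters_larger_bottom \<alpha> n \<Longrightarrow> n \<le> m \<Longrightarrow> enters_larger_bottom \<alpha> m"
  unfolding enters_larger_bottom_def by (meson order_trans)

lemma progress_within_mono: "progress_within \<alpha> n \<Longrightarrow> n \<le> m \<Longrightarrow> progress_within \<alpha> m"
  unfolding progress_within_def by (meson enters_larger_bottom_mono le_trans)

lemma progress_within_run:
  assumes "set \<sigma> \<subseteq> T" "run \<sigma> \<alpha> \<alpha>'" "progress_within \<alpha>' n"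
  shows "progress_within \<alpha> (length \<sigma> + n)"
proof -
  obtain \<sigma>' \<alpha>'' where \<sigma>': "set \<sigma>' \<subseteq> T" "length \<sigma>' \<le> n" "run \<sigma>' \<alpha>' \<alpha>''"
    and "pumped \<alpha>'' \<or> enters_larger_bottom \<alpha>'' n"
    using assms(3) unfolding progress_within_def by blast
  then have "pumped \<alpha>'' \<or> enters_larger_bottom \<alpha>'' (length \<sigma> + n)"
    using enters_larger_bottom_mono le_add2 by blast
  moreover have "run (\<sigma> @ \<sigma>') \<alpha> \<alpha>''" using assms(2) \<sigma>'(3) run_append by blast
  ultimately show ?thesis
    unfolding progress_within_def using assms(1) \<sigma>'(1,2)
    by (intro exI[of _ "\<sigma> @ \<sigma>'"] exI[of _ \<alpha>'']) auto
qed

lemma finite_comp_Q: "finite comp_Q"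
  using bottom_Q by (simp add: bottom_def)

lemma comp_Q_closed: "\<beta> \<in> comp_Q \<Longrightarrow> reach (restr_net Q T) \<beta> \<gamma> \<Longrightarrow> \<gamma> \<in> comp_Q"
  using bottom_Q unfolding bottom_def component_def by (blast intro: reach_trans)

lemma reach_restr_net_in_comp_Q:
  assumes "Q \<subseteq> X" "reach T \<rho> \<alpha>" "reach (restr_net X T) (restr X \<alpha>) \<beta>"
  shows "restr Q \<beta> \<in> comp_Q"
proof -
  have "restr Q \<rho> \<in> comp_Q" by (simp add: component_def reach_refl)
  moreover have "reach (restr_net Q T) (restr Q \<rho>) (restr Q \<alpha>)" using assms(2) by (rule reach_restr)
  moreover have "reach (restr_net Q T) (restr Q \<alpha>) (restr Q \<beta>)"
    using reach_restr[OF assms(3), of Q] assms(1) by (simp add: restr_net_restr_net restr_restr)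
  ultimately show ?thesis using comp_Q_closed reach_trans by metis
qed

lemma pumping_run:
  assumes "reach T \<rho> \<alpha>"
    and large: "\<forall>p\<in>P - Q. 1 + card comp_Q * norm_net P T + norm_config P \<rho> \<le> \<alpha> p"
  shows "progress_within \<alpha> (card comp_Q)"
proof -
  let ?a = "norm_net P T"
  have in_comp: "restr Q \<gamma> \<in> comp_Q" if "reach (restr_net Q T) (restr Q \<alpha>) \<gamma>" for \<gamma>
    using reach_restr_net_in_comp_Q[OF order_refl assms(1) that] by (simp add: restr_restr)
  have "restr Q \<alpha> \<in> comp_Q" using in_comp[OF reach_refl] by (simp add: restr_restr)
  then have returns: "reach (restr_net Q T) (restr Q \<alpha>) (restr Q \<rho>)" by (simp add: component_def)
  have within: "\<gamma> \<in> comp_Q" if "reach (restr_net Q T) (restr Q \<alpha>) \<gamma>" for \<gamma>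
    using in_comp[OF that] restr_is_config[OF reach_restr_net_is_config[OF that is_config_restr]]
    by simp
  have "\<forall>p\<in>P - Q. ?a * card comp_Q \<le> \<alpha> p"
  proof
    fix p assume "p \<in> P - Q"
    with large have "1 + card comp_Q * ?a + norm_config P \<rho> \<le> \<alpha> p" by blast
    then show "?a * card comp_Q \<le> \<alpha> p" by (simp add: mult.commute)
  qed
  then obtain \<sigma> \<rho>' where \<sigma>: "set \<sigma> \<subseteq> T" "length \<sigma> \<le> card comp_Q" "run \<sigma> \<alpha> \<rho>'"
    "restr Q \<rho>' = restr Q \<rho>" and lost: "\<forall>p\<in>P - Q. \<alpha> p \<le> \<rho>' p + ?a * card comp_Q"
    using short_lifted_run[where G = "\<lambda>\<gamma>. \<gamma> = restr Q \<rho>", OF finite_P net finite_comp_Q returns refl within]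
    by blast
  have "\<rho> p < \<rho>' p" if p: "p \<in> P - Q" for p
  proof -
    have "1 + card comp_Q * ?a + norm_config P \<rho> \<le> \<alpha> p" "\<alpha> p \<le> \<rho>' p + ?a * card comp_Q"
      using large lost p by blast+
    moreover have "\<rho> p \<le> norm_config P \<rho>" using p by (simp add: norm_config_ge[OF finite_P])
    moreover have "card comp_Q * ?a = ?a * card comp_Q" by (rule mult.commute)
    ultimately show ?thesis by linarith
  qed
  with \<sigma> show ?thesis unfolding progress_within_def pumped_def by blast
qed

lemma run_to_larger_bottom:
  assumes "Q \<subset> X" "X \<subseteq> P"
    and fin: "finite {\<beta>. reach (restr_net X T) (restr X \<alpha>) \<beta>}"
    and card: "card {\<beta>. reach (restr_net X T) (restr X \<alpha>) \<beta>} \<le> n"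
    and large: "\<forall>p\<in>P - X. norm_net P T * n \<le> \<alpha> p"
  shows "\<exists>\<sigma> \<alpha>'. set \<sigma> \<subseteq> T \<and> length \<sigma> \<le> n \<and> run \<sigma> \<alpha> \<alpha>' \<and> enters_larger_bottom \<alpha>' n"
proof -
  let ?R = "{\<beta>. reach (restr_net X T) (restr X \<alpha>) \<beta>}"
  obtain \<beta> where \<beta>: "reach (restr_net X T) (restr X \<alpha>) \<beta>" "bottom (restr_net X T) \<beta>"
    "card (component (restr_net X T) \<beta>) \<le> card ?R"
    using reach_bottom[OF fin] by blast
  have "\<forall>p\<in>P - X. norm_net P T * card ?R \<le> \<alpha> p"
  proof
    fix p assume "p \<in> P - X"
    with large have "norm_net P T * n \<le> \<alpha> p" by blast
    moreover have "norm_net P T * card ?R \<le> norm_net P T * n" using card by simp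
    ultimately show "norm_net P T * card ?R \<le> \<alpha> p" by linarith
  qed
  then obtain \<sigma> \<alpha>' where \<sigma>: "set \<sigma> \<subseteq> T" "length \<sigma> \<le> card ?R" "run \<sigma> \<alpha> \<alpha>'" "restr X \<alpha>' = \<beta>"
    using short_lifted_run[where G = "\<lambda>\<gamma>. \<gamma> = \<beta>", OF finite_P net fin \<beta>(1) refl] by blast
  have "enters_larger_bottom \<alpha>' n"
    unfolding enters_larger_bottom_def using assms(1,2) \<beta>(2) le_trans[OF \<beta>(3) card] \<sigma>(4) by blast
  moreover have "length \<sigma> \<le> n" using \<sigma>(2) card by (rule le_trans)
  ultimately show ?thesis using \<sigma>(1,3) by blast
qed

lemma card_reachable_below:
  fixes h :: nat
  assumes "U \<subseteq> P - Q" "reach T \<rho> \<alpha>"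
  defines "L \<equiv> {\<beta>. reach (restr_net (Q \<union> U) T) (restr (Q \<union> U) \<alpha>) \<beta> \<and> (\<forall>p\<in>U. \<beta> p < h)}"
  shows "finite L" "card L \<le> card comp_Q * h ^ card U"
proof -
  define box where "box = {\<beta>. restr Q \<beta> \<in> comp_Q \<and> (\<forall>p\<in>U. \<beta> p < h) \<and> is_config (Q \<union> U) \<beta>}"
  have "finite U" using assms(1) finite_P finite_subset by blast
  then have box: "finite box" "card box \<le> card comp_Q * h ^ card U"
    using finite_card_bounded_configs[where h = h, OF finite_comp_Q] unfolding box_def by auto
  have "L \<subseteq> box"
    using reach_restr_net_in_comp_Q[of "Q \<union> U"] reach_restr_net_is_config[OF _ is_config_restr] assms(2)
    unfolding L_def box_def by blast
  show "finite L" using \<open>L \<subseteq> box\<close> box(1) by (rule finite_subset)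
  show "card L \<le> card comp_Q * h ^ card U" using card_mono[OF box(1) \<open>L \<subseteq> box\<close>] box(2) by linarith
qed

lemma run_raising_place:
  fixes U :: "'p set" and h :: nat
  defines "n \<equiv> card comp_Q * h ^ card U"
  assumes "U \<subseteq> P - Q" "reach T \<rho> \<alpha>"
    and "reach (restr_net (Q \<union> U) T) (restr (Q \<union> U) \<alpha>) \<beta>" "\<exists>p\<in>U. h \<le> \<beta> p"
    and large: "\<forall>p\<in>P - Q - U. h + norm_net P T * n \<le> \<alpha> p"
  shows "\<exists>\<sigma> \<alpha>'. set \<sigma> \<subseteq> T \<and> length \<sigma> \<le> n \<and> run \<sigma> \<alpha> \<alpha>' \<and>
    (\<exists>p\<^sub>0\<in>U. \<forall>p\<in>P - Q - (U - {p\<^sub>0}). h \<le> \<alpha>' p)"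
proof -
  let ?a = "norm_net P T" and ?X = "Q \<union> U"
  let ?L = "{\<beta>. reach (restr_net ?X T) (restr ?X \<alpha>) \<beta> \<and> (\<forall>p\<in>U. \<beta> p < h)}"
  have L: "finite ?L" "card ?L \<le> n" using card_reachable_below[OF assms(2,3)] unfolding n_def by blast+
  have budget: "h + ?a * card ?L \<le> \<alpha> p" if "p \<in> P - ?X" for p
  proof -
    have "h + ?a * n \<le> \<alpha> p" using large that by blast
    moreover have "?a * card ?L \<le> ?a * n" using L(2) by simp
    ultimately show ?thesis by linarith
  qed
  then have "\<forall>p\<in>P - ?X. ?a * card ?L \<le> \<alpha> p" by (meson add_leE)
  moreover have "\<gamma> \<in> ?L" if "reach (restr_net ?X T) (restr ?X \<alpha>) \<gamma>" "\<not> (\<exists>p\<in>U. h \<le> \<gamma> p)" for \<gamma>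
    using that by (auto simp: not_le)
  ultimately obtain \<sigma> \<alpha>' where \<sigma>: "set \<sigma> \<subseteq> T" "length \<sigma> \<le> card ?L" "run \<sigma> \<alpha> \<alpha>'"
    and raised: "\<exists>p\<in>U. h \<le> restr ?X \<alpha>' p" and lost: "\<forall>p\<in>P - ?X. \<alpha> p \<le> \<alpha>' p + ?a * card ?L"
    using short_lifted_run[where G = "\<lambda>\<gamma>. \<exists>p\<in>U. h \<le> \<gamma> p", OF finite_P net L(1) assms(4,5)]
    by blast
  from raised obtain p\<^sub>0 where "p\<^sub>0 \<in> U" "h \<le> \<alpha>' p\<^sub>0" by (auto simp: restr_def)
  moreover have "h \<le> \<alpha>' p" if "p \<in> P - ?X" for p
  proof -
    have "\<alpha> p \<le> \<alpha>' p + ?a * card ?L" using lost that by blast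
    with budget[OF that] show ?thesis by linarith
  qed
  ultimately have "\<forall>p\<in>P - Q - (U - {p\<^sub>0}). h \<le> \<alpha>' p" by blast
  moreover have "length \<sigma> \<le> n" using \<sigma>(2) L(2) by (rule le_trans)
  ultimately show ?thesis using \<sigma>(1,3) \<open>p\<^sub>0 \<in> U\<close> by blast
qed

lemma larger_bottom_or_raised_place:
  fixes U :: "'p set" and h :: nat
  defines "n \<equiv> card comp_Q * h ^ card U"
  assumes U: "U \<subseteq> P - Q" "U \<noteq> {}" and "reach T \<rho> \<alpha>"
    and large: "\<forall>p\<in>P - Q - U. h + norm_net P T * n \<le> \<alpha> p"
  shows "\<exists>\<sigma> \<alpha>'. set \<sigma> \<subseteq> T \<and> length \<sigma> \<le> n \<and> run \<sigma> \<alpha> \<alpha>' \<and>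
    (enters_larger_bottom \<alpha>' n \<or> (\<exists>p\<^sub>0\<in>U. \<forall>p\<in>P - Q - (U - {p\<^sub>0}). h \<le> \<alpha>' p))"
proof (cases "\<forall>\<beta>. reach (restr_net (Q \<union> U) T) (restr (Q \<union> U) \<alpha>) \<beta> \<longrightarrow> (\<forall>p\<in>U. \<beta> p < h)")
  case True
  then have "{\<beta>. reach (restr_net (Q \<union> U) T) (restr (Q \<union> U) \<alpha>) \<beta>} =
    {\<beta>. reach (restr_net (Q \<union> U) T) (restr (Q \<union> U) \<alpha>) \<beta> \<and> (\<forall>p\<in>U. \<beta> p < h)}" by blast
  then have "finite {\<beta>. reach (restr_net (Q \<union> U) T) (restr (Q \<union> U) \<alpha>) \<beta>}"
    "card {\<beta>. reach (restr_net (Q \<union> U) T) (restr (Q \<union> U) \<alpha>) \<beta>} \<le> n"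
    using card_reachable_below[OF U(1) \<open>reach T \<rho> \<alpha>\<close>, of h] unfolding n_def by simp_all
  moreover have "Q \<subset> Q \<union> U" "Q \<union> U \<subseteq> P" using U Q_subset by auto
  moreover have "\<forall>p\<in>P - (Q \<union> U). norm_net P T * n \<le> \<alpha> p"
  proof
    fix p assume "p \<in> P - (Q \<union> U)"
    with large have "h + norm_net P T * n \<le> \<alpha> p" by blast
    then show "norm_net P T * n \<le> \<alpha> p" by linarith
  qed
  ultimately show ?thesis using run_to_larger_bottom[of "Q \<union> U" \<alpha> n] by blast
next
  case False
  then obtain \<beta> where "reach (restr_net (Q \<union> U) T) (restr (Q \<union> U) \<alpha>) \<beta>" "\<exists>p\<in>U. h \<le> \<beta> p"
    by (auto simp: not_less)
  then show ?thesis using run_raising_place[OF U(1) \<open>reach T \<rho> \<alpha>\<close> _ _ large[unfolded n_def]]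
    unfolding n_def by blast
qed

lemma progress_within_length_bound:
  defines "s \<equiv> card comp_Q"
  defines "K \<equiv> 1 + s * norm_net P T + norm_config P \<rho>" and "c \<equiv> norm_net P T * s"
  assumes "U \<subseteq> P - Q" "reach T \<rho> \<alpha>" "\<forall>p\<in>P - Q - U. threshold K c (card U) \<le> \<alpha> p"
  shows "progress_within \<alpha> (length_bound s K c (card U))"
  using assms(4-6)
proof (induction "card U" arbitrary: U \<alpha>)
  case 0
  then have "U = {}" using finite_P finite_subset by (metis card_0_eq finite_Diff)
  with 0 show ?case
    using pumping_run[of \<alpha>] by (auto simp: length_bound_def s_def K_def)
next
  case (Suc j)
  let ?h = "threshold K c j" and ?n = "s * threshold K c j ^ card U"
  have bound_Suc: "length_bound s K c (card U) = ?n + length_bound s K c j"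
    using Suc.hyps(2)[symmetric] by (simp add: length_bound_Suc)
  have "U \<noteq> {}" using Suc.hyps(2) by auto
  moreover have "\<forall>p\<in>P - Q - U. ?h + norm_net P T * ?n \<le> \<alpha> p"
    using Suc.prems(3) Suc.hyps(2)[symmetric] by (simp add: c_def mult.assoc)
  ultimately obtain \<sigma> \<alpha>' where \<sigma>: "set \<sigma> \<subseteq> T" "length \<sigma> \<le> ?n" "run \<sigma> \<alpha> \<alpha>'"
    and next_: "enters_larger_bottom \<alpha>' ?n \<or> (\<exists>p\<^sub>0\<in>U. \<forall>p\<in>P - Q - (U - {p\<^sub>0}). ?h \<le> \<alpha>' p)"
    using larger_bottom_or_raised_place[OF Suc.prems(1) _ Suc.prems(2)] unfolding s_def by blast
  from next_ show ?case
  proof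
    assume "enters_larger_bottom \<alpha>' ?n"
    with \<sigma> have "progress_within \<alpha> ?n" unfolding progress_within_def by blast
    then show ?thesis using bound_Suc progress_within_mono by simp
  next
    assume "\<exists>p\<^sub>0\<in>U. \<forall>p\<in>P - Q - (U - {p\<^sub>0}). ?h \<le> \<alpha>' p"
    then obtain p\<^sub>0 where "p\<^sub>0 \<in> U" "\<forall>p\<in>P - Q - (U - {p\<^sub>0}). ?h \<le> \<alpha>' p" by blast
    moreover have "reach T \<rho> \<alpha>'" using Suc.prems(2) \<sigma>(1,3) by (rule reach_run_trans)
    moreover have "card (U - {p\<^sub>0}) = j" using Suc.hyps(2) \<open>p\<^sub>0 \<in> U\<close> by simp
    ultimately have "progress_within \<alpha>' (length_bound s K c j)"
      using Suc.hyps(1)[of "U - {p\<^sub>0}" \<alpha>'] Suc.prems(1) by auto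
    then have "progress_within \<alpha> (length \<sigma> + length_bound s K c j)"
      by (rule progress_within_run[OF \<sigma>(1,3)])
    then show ?thesis using \<sigma>(2) bound_Suc progress_within_mono by simp
  qed
qed

end


theorem lemma6p2:
  fixes P Q :: "'p set" and T :: "'p trans set" and \<rho> :: "'p config"
  assumes "finite P"
    and "is_net P T"
    and "is_config P \<rho>"
    and "Q \<subseteq> P"
    and "bottom (restr_net Q T) (restr Q \<rho>)"
  defines "s \<equiv> card (component (restr_net Q T) (restr Q \<rho>))"
    and "d \<equiv> card (P - Q)"
  defines "B \<equiv> (1 + d * (1 + s * norm_net P T + norm_config P \<rho>) ^ (d ^ d)) * s"
  shows "\<exists>\<sigma> \<rho>'. set \<sigma> \<subseteq> T \<and> length \<sigma> \<le> B \<and> run \<sigma> \<rho> \<rho>' \<and>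
           ((restr Q \<rho>' = restr Q \<rho> \<and> (\<forall>p\<in>P - Q. \<rho>' p > \<rho> p)) \<or>
            (\<exists>Q'. Q \<subset> Q' \<and> Q' \<subseteq> P \<and> bottom (restr_net Q' T) (restr Q' \<rho>') \<and>
                  card (component (restr_net Q' T) (restr Q' \<rho>')) \<le> B))"
proof -
  interpret bottom_restriction P Q T \<rho>
    using assms(1,2,4,5) by unfold_locales
  define K where "K = 1 + s * norm_net P T + norm_config P \<rho>"
  define c where "c = norm_net P T * s"
  have "progress_within \<rho> (length_bound s K c d)"
    using progress_within_length_bound[of "P - Q", OF _ reach_refl] unfolding s_def K_def c_def d_def
    by simp
  moreover have "length_bound s K c d \<le> B"
    unfolding B_def K_def[symmetric] by (rule length_bound_le) (simp add: K_def c_def)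
  ultimately have "progress_within \<rho> B" by (rule progress_within_mono)
  then show ?thesis unfolding progress_within_def pumped_def enters_larger_bottom_def .
qed

end
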